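(* Let $d,N\ge1$ and $1\le r\le d^N$. Work in the quotient $V=\mathbb{R}^{d\times N}/L$, where $L$ is the lineality space of the normal fans below, and let $\overline{\mathsf{T}}$ be the image of $\mathsf{T}_{d,N}$ in $V$. Let $\Sigma^r$ denote the normal fan (in $V$) of the $r$-lineup polytope of the vertex set of $\Pi_{d,N}$, and let $\mathcal{T}^r=\{C\cap\overline{\mathsf{T}}:C\in\Sigma^r\}$ be its test fan. Then every ray (one-dimensional cone) of $\mathcal{T}^r$ is a ray of $\Sigma^{d^N}$, the normal fan of the sweep polytope $\mathcal{L}(\Pi_{d,N})$. (It need not be a ray of $\Sigma^r$.)
   Context: $\Pi_{d,N}=(\Delta_{d-1})^N\subset\mathbb{R}^{d\times N}$ with vertices $(\mathbf{e}_{i_1},\dots,\mathbf{e}_{i_N})$, $i_j\in[d]$. $\mathsf{T}_{d,N}=\{\mathbf{x}: 0\le x_{1,j}\le\dots\le x_{d,j}\ \forall j\in[N]\}$. For a point configuration $\mathbf{A}$ of size $n$, $1\le r\le n$, and weights $w_1>\dots>w_r>0$ with $\sum w_i=1$, the $r$-lineup polytope is $\operatorname{conv}\{\sum_{i=1}^r w_i\mathbf{v}_i:(\mathbf{v}_1,\dots,\mathbf{v}_r)\text{ an ordered list of distinct points of }\mathbf{A}\}$; its normal fan does not depend on the weights, and for $r=n$ it is the sweep polytope $\mathcal{L}(\mathbf{A})$. $L$ is the orthogonal complement of the affine hull of $\Pi_{d,N}$, spanned by the vectors $\sum_{i=1}^d\mathbf{e}_{i,j}$, $j\in[N]$; all these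 normal fans contain $L$ in every cone, and are considered as fans in $V$. The fans satisfy the refinement chain $\Sigma^1\succeq\Sigma^2\succeq\dots\succeq\Sigma^{d^N}$. *)

theory Defs
  imports "HOL-Analysis.Analysis"
begin

text \<open>Ambient space R^(d x N) is real^('d \<times> 'n); coordinate x_{i,j} is x $ (i,j).
  d = CARD('d), N = CARD('n); the linear order on 'd labels the rows 1..d.\<close>

definition Pi_vert :: "('n \<Rightarrow> 'd) \<Rightarrow> real^('d::finite \<times> 'n::finite)" where
  "Pi_vert f = (\<chi> p. if fst p = f (snd p) then 1 else 0)"

text \<open>Vertex set of Pi_{d,N} = (Delta_{d-1})^N: tuples (e_{i_1},...,e_{i_N}).\<close>
definition Pi_vertices :: "(real^('d::finite \<times> 'n::finite)) set" where
  "Pi_vertices = range Pi_vert"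

text \<open>Weights w_1 > ... > w_r > 0 summing to 1 (indexed 0..r-1).\<close>
definition valid_weights :: "nat \<Rightarrow> (nat \<Rightarrow> real) \<Rightarrow> bool" where
  "valid_weights r w \<longleftrightarrow> (\<forall>i. i + 1 < r \<longrightarrow> w (i + 1) < w i) \<and> (\<forall>i<r. 0 < w i)
     \<and> (\<Sum>i<r. w i) = 1"

definition lineup_points :: "nat \<Rightarrow> (nat \<Rightarrow> real) \<Rightarrow> 'a::real_vector set \<Rightarrow> 'a set" where
  "lineup_points r w A =
     {(\<Sum>i<r. w i *\<^sub>R (vs ! i)) | vs. distinct vs \<and> length vs = r \<and> set vs \<subseteq> A}"

definition lineup_polytope :: "nat \<Rightarrow> (nat \<Rightarrow> real) \<Rightarrow> 'a::real_vector set \<Rightarrow> 'a set" where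
  "lineup_polytope r w A = convex hull (lineup_points r w A)"

definition face_normal_cone :: "'a::real_inner set \<Rightarrow> 'a set \<Rightarrow> 'a set" where
  "face_normal_cone P F = {c. \<forall>x\<in>F. \<forall>y\<in>P. inner c y \<le> inner c x}"

definition normal_fan :: "'a::real_inner set \<Rightarrow> 'a set set" where
  "normal_fan P = {face_normal_cone P F | F. F face_of P \<and> F \<noteq> {}}"

definition T_cone :: "(real^('d::{finite,linorder} \<times> 'n::finite)) set" where
  "T_cone = {x. \<forall>j. (\<forall>i. 0 \<le> x $ (i, j)) \<and> (\<forall>i i'. i \<le> i' \<longrightarrow> x $ (i, j) \<le> x $ (i', j))}"

definition L_space :: "(real^('d::finite \<times> 'n::finite)) set" where
  "L_space = span (range (\<lambda>j. (\<chi> p. if snd p = j then 1 else 0)))"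

text \<open>Preimage in R^(d x N) of the image of T_{d,N} in V = R^(d x N)/L.\<close>
definition T_bar :: "(real^('d::{finite,linorder} \<times> 'n::finite)) set" where
  "T_bar = {t + l | t l. t \<in> T_cone \<and> l \<in> L_space}"

definition test_fan :: "(real^('d::{finite,linorder} \<times> 'n::finite)) set set
    \<Rightarrow> (real^('d \<times> 'n)) set set" where
  "test_fan F = {C \<inter> T_bar | C. C \<in> F}"

end

theory Submission
  imports Defs "HOL-Library.Cardinality"
begin

text \<open>Maximising a functional c over the r-lineup polytope of a finite set A is solved greedily:
  by an exchange argument, a list is optimal iff it consists of r points of largest c-value in
  decreasing order. Hence whether c is maximised on a face depends only on the preorder that c
  induces on A: normal cones of lineup polytopes are closed under coarsening this preorder, and for
  the sweep polytope (r = |A|) the normal cone of the face maximising u consists exactly of the c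
  whose preorder is coarser than that of u. A cone K = C \<inter> T_bar of the test fan is therefore
  closed under coarsening (for T_bar, compare vertices of Pi that differ in one column). If K has
  dimension dim L + 1 it is L + [0,\<infinity>) v, so K is the set of all coarsenings of v, which is the
  normal cone of the face of the sweep polytope maximising v.\<close>

section \<open>Preorders induced by functionals, and maximal faces\<close>

definition refines_on :: "'a::real_inner set \<Rightarrow> 'a \<Rightarrow> 'a \<Rightarrow> bool" where
  "refines_on A u c \<longleftrightarrow> (\<forall>a\<in>A. \<forall>b\<in>A. u \<bullet> a \<le> u \<bullet> b \<longrightarrow> c \<bullet> a \<le> c \<bullet> b)"

definition max_face :: "'a::real_inner set \<Rightarrow> 'a \<Rightarrow> 'a set" where
  "max_face P u = {x\<in>P. \<forall>y\<in>P. u \<bullet> y \<le> u \<bullet> x}"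

lemma refines_on_scale_add:
  assumes "0 \<le> s" "\<And>a b. a \<in> A \<Longrightarrow> b \<in> A \<Longrightarrow> l \<bullet> a = l \<bullet> b"
  shows "refines_on A u (s *\<^sub>R u + l)"
  unfolding refines_on_def
proof (intro ballI impI)
  fix a b assume "a \<in> A" "b \<in> A" "u \<bullet> a \<le> u \<bullet> b"
  then have "s * (u \<bullet> a) \<le> s * (u \<bullet> b)" and "l \<bullet> a = l \<bullet> b"
    using assms(1) mult_left_mono assms(2) by blast+
  then show "(s *\<^sub>R u + l) \<bullet> a \<le> (s *\<^sub>R u + l) \<bullet> b" by (simp add: inner_add_left)
qed

lemma mem_face_normal_cone_iff:
  "F \<subseteq> P \<Longrightarrow> c \<in> face_normal_cone P F \<longleftrightarrow> F \<subseteq> max_face P c"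
  by (auto simp: face_normal_cone_def max_face_def)

lemma max_face_face_of:
  assumes "convex P"
  shows "max_face P u face_of P"
proof (cases "max_face P u = {}")
  case False
  then obtain x0 where "x0 \<in> max_face P u" by blast
  then have x0: "x0 \<in> P" "\<And>y. y \<in> P \<Longrightarrow> u \<bullet> y \<le> u \<bullet> x0"
    by (auto simp: max_face_def)
  have "x \<in> max_face P u \<longleftrightarrow> x \<in> P \<inter> {x. u \<bullet> x = u \<bullet> x0}" for x
  proof
    assume "x \<in> max_face P u"
    then have "x \<in> P" "u \<bullet> x0 \<le> u \<bullet> x" using x0(1) by (auto simp: max_face_def)
    then show "x \<in> P \<inter> {x. u \<bullet> x = u \<bullet> x0}" using x0(2) by (simp add: antisym)
  qed (use x0 in \<open>simp add: max_face_def\<close>)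
  then have "max_face P u = P \<inter> {x. u \<bullet> x = u \<bullet> x0}" by blast
  moreover have "P \<inter> {x. u \<bullet> x = u \<bullet> x0} face_of P"
    using assms x0 by (intro face_of_Int_supporting_hyperplane_le)
  ultimately show ?thesis by simp
qed (simp add: empty_face_of)

lemma convex_hull_supporting_hyperplane:
  fixes P :: "'a::real_inner set"
  assumes P: "finite P" "\<And>p. p \<in> P \<Longrightarrow> u \<bullet> p \<le> M"
    and x: "x \<in> convex hull P" "u \<bullet> x = M"
  shows "x \<in> convex hull {p\<in>P. u \<bullet> p = M}"
proof -
  let ?Q = "{p\<in>P. u \<bullet> p = M}"
  obtain \<mu> where \<mu>: "\<forall>p\<in>P. 0 \<le> \<mu> p" "sum \<mu> P = 1" "(\<Sum>p\<in>P. \<mu> p *\<^sub>R p) = x"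
    using x(1) unfolding convex_hull_finite[OF P(1)] by blast
  have "(\<Sum>p\<in>P. \<mu> p * (M - u \<bullet> p)) = M * sum \<mu> P - u \<bullet> x"
    unfolding \<mu>(3)[symmetric]
    by (simp add: algebra_simps sum_subtractf sum_distrib_left inner_sum_right)
  also have "\<dots> = 0" using \<mu>(2) x(2) by simp
  finally have "\<forall>p\<in>P. \<mu> p * (M - u \<bullet> p) = 0"
    using sum_nonneg_eq_0_iff[OF P(1), of "\<lambda>p. \<mu> p * (M - u \<bullet> p)"] \<mu>(1) P(2) by simp
  then have zero: "\<forall>p\<in>P - ?Q. \<mu> p = 0" by auto
  have "sum \<mu> ?Q = 1"
    using sum.mono_neutral_left[OF P(1) _ zero] \<mu>(2) by simp
  moreover have "(\<Sum>p\<in>?Q. \<mu> p *\<^sub>R p) = x"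
    using sum.mono_neutral_left[OF P(1), of ?Q "\<lambda>p. \<mu> p *\<^sub>R p"] zero \<mu>(3) by simp
  moreover have "finite ?Q" using P(1) by simp
  ultimately show ?thesis
    using \<mu>(1) convex_hull_finite[of ?Q] by blast
qed

lemma cone_ray_over_subspace:
  fixes K L :: "'a::euclidean_space set"
  assumes L: "subspace L" "L \<subseteq> K" and K: "cone K"
    and add: "\<And>x l. x \<in> K \<Longrightarrow> l \<in> L \<Longrightarrow> x + l \<in> K"
    and pointed: "\<And>x. x \<in> K \<Longrightarrow> - x \<in> K \<Longrightarrow> x \<in> L"
    and dim: "aff_dim K = aff_dim L + 1"
  obtains v where "v \<in> K" "\<And>c. c \<in> K \<Longrightarrow> \<exists>s\<ge>0. c - s *\<^sub>R v \<in> L"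
proof -
  have "0 \<in> K" using subspace_0[OF L(1)] L(2) by blast
  then have "aff_dim K = int (dim K)" by (intro aff_dim_zero hull_inc)
  then have dimK: "dim K = dim L + 1" using dim aff_dim_subspace[OF L(1)] by simp
  have "\<not> K \<subseteq> L" using dim_subset[of K L] dimK by linarith
  then obtain v where v: "v \<in> K" "v \<notin> L" by blast
  have span_L: "span L = L" using L(1) by (rule span_eq_iff[THEN iffD2])
  have "v \<notin> span L" unfolding span_L by (rule v(2))
  then have "dim (insert v L) = dim L + 1" by (simp add: dim_insert)
  then have "span (insert v L) = span K"
    using L(2) v(1) dimK by (intro dim_eq_span) simp_all
  then have "\<exists>s. c - s *\<^sub>R v \<in> L" if "c \<in> K" for c
    using span_breakdown_eq[of c v L] span_base[OF that] span_L by simp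
  moreover have "0 \<le> s" if c: "c \<in> K" and s: "c - s *\<^sub>R v \<in> L" for c s
  proof (rule ccontr)
    assume "\<not> 0 \<le> s"
    have "s *\<^sub>R v \<in> K" using add[OF c subspace_neg[OF L(1) s]] by simp
    moreover have "0 \<le> - 1 / s" using \<open>\<not> 0 \<le> s\<close> by simp
    ultimately have "(- 1 / s) *\<^sub>R (s *\<^sub>R v) \<in> K" using K unfolding cone_def by blast
    moreover have "(- 1 / s) *\<^sub>R (s *\<^sub>R v) = - v" using \<open>\<not> 0 \<le> s\<close> by simp
    ultimately have "- v \<in> K" by (simp only:)
    then show False using pointed v by blast
  qed
  ultimately show thesis using that v(1) by blast
qed

section \<open>Lineup polytopes\<close>

definition lineup_lists :: "nat \<Rightarrow> 'a set \<Rightarrow> 'a list set" where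
  "lineup_lists r A = {vs. distinct vs \<and> length vs = r \<and> set vs \<subseteq> A}"

definition lineup_point :: "nat \<Rightarrow> (nat \<Rightarrow> real) \<Rightarrow> 'a::real_vector list \<Rightarrow> 'a" where
  "lineup_point r w vs = (\<Sum>i<r. w i *\<^sub>R vs ! i)"

definition lineup_optimal ::
    "nat \<Rightarrow> (nat \<Rightarrow> real) \<Rightarrow> 'a::real_inner set \<Rightarrow> 'a \<Rightarrow> 'a list \<Rightarrow> bool" where
  "lineup_optimal r w A c vs \<longleftrightarrow> vs \<in> lineup_lists r A \<and>
     (\<forall>us\<in>lineup_lists r A. c \<bullet> lineup_point r w us \<le> c \<bullet> lineup_point r w vs)"

definition greedy_lineup :: "nat \<Rightarrow> 'a::real_inner set \<Rightarrow> 'a \<Rightarrow> 'a list \<Rightarrow> bool" where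
  "greedy_lineup r A c vs \<longleftrightarrow> vs \<in> lineup_lists r A \<and>
     (\<forall>i j. i < j \<longrightarrow> j < r \<longrightarrow> c \<bullet> vs ! j \<le> c \<bullet> vs ! i) \<and>
     (\<forall>x\<in>A - set vs. \<forall>i<r. c \<bullet> x \<le> c \<bullet> vs ! i)"

lemma lineup_points_eq_image: "lineup_points r w A = lineup_point r w ` lineup_lists r A"
  unfolding lineup_points_def lineup_point_def lineup_lists_def by auto

lemma finite_lineup_lists: "finite A \<Longrightarrow> finite (lineup_lists r A)"
  unfolding lineup_lists_def by (rule finite_subset[OF _ finite_lists_length_eq[of A r]]) auto

lemma lineup_lists_nonempty:
  assumes "finite A" "r \<le> card A"
  shows "lineup_lists r A \<noteq> {}"
proof -
  obtain xs where "set xs = A" "distinct xs"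
    using finite_distinct_list[OF assms(1)] by blast
  then have "take r xs \<in> lineup_lists r A"
    using assms(2) distinct_card[of xs] by (auto simp: lineup_lists_def dest: in_set_takeD)
  then show ?thesis by blast
qed

lemma inner_lineup_point: "c \<bullet> lineup_point r w vs = (\<Sum>i<r. w i * (c \<bullet> vs ! i))"
  by (simp add: lineup_point_def inner_sum_right)

lemma lineup_point_list_update:
  assumes "i < r" "i < length vs"
  shows "lineup_point r w (vs[i := x]) = lineup_point r w vs + w i *\<^sub>R (x - vs ! i)"
proof -
  have "lineup_point r w (vs[i := x])
      = (\<Sum>k<r. w k *\<^sub>R vs ! k + (if k = i then w i *\<^sub>R (x - vs ! i) else 0))"
    unfolding lineup_point_def using assms(2)
    by (intro sum.cong) (auto simp: nth_list_update algebra_simps)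
  then show ?thesis
    using assms(1) by (simp add: sum.distrib lineup_point_def)
qed

lemma lineup_point_swap:
  assumes "i < r" "j < r" "i < length vs" "j < length vs"
  shows "lineup_point r w (vs[i := vs ! j, j := vs ! i])
           = lineup_point r w vs + (w i - w j) *\<^sub>R (vs ! j - vs ! i)"
  using assms
  by (cases "i = j") (simp_all add: lineup_point_list_update nth_list_update algebra_simps)

lemma valid_weights_decreasing:
  assumes "valid_weights r w" "i < j" "j < r"
  shows "w j < w i"
  using assms(2,3)
proof (induction j)
  case (Suc j)
  then have "w (Suc j) < w j"
    using assms(1) by (simp add: valid_weights_def)
  with Suc show ?case by (cases "i = j") auto
qed simp

lemma lineup_optimal_imp_greedy:
  assumes w: "valid_weights r w" and opt: "lineup_optimal r w A c vs"
  shows "greedy_lineup r A c vs"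
proof -
  have vs: "vs \<in> lineup_lists r A"
    and max: "\<And>us. us \<in> lineup_lists r A \<Longrightarrow>
                c \<bullet> lineup_point r w us \<le> c \<bullet> lineup_point r w vs"
    using opt by (auto simp: lineup_optimal_def)
  then have len: "length vs = r" and dist: "distinct vs" and sub: "set vs \<subseteq> A"
    by (auto simp: lineup_lists_def)
  have "c \<bullet> vs ! j \<le> c \<bullet> vs ! i" if ij: "i < j" "j < r" for i j
  proof -
    have "vs[i := vs ! j, j := vs ! i] \<in> lineup_lists r A"
      using ij len dist sub by (auto simp: lineup_lists_def)
    from max[OF this] have "(w i - w j) * (c \<bullet> vs ! j - c \<bullet> vs ! i) \<le> 0"
      using ij len by (simp add: lineup_point_swap inner_add_right inner_diff_right)
    moreover have "w j < w i" using valid_weights_decreasing[OF w ij] .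
    ultimately show ?thesis by (simp add: mult_le_0_iff)
  qed
  moreover have "c \<bullet> x \<le> c \<bullet> vs ! i" if x: "x \<in> A - set vs" and i: "i < r" for x i
  proof -
    have "vs[i := x] \<in> lineup_lists r A"
      using x len dist sub set_update_subset_insert[of vs i x]
      by (auto simp: lineup_lists_def distinct_list_update)
    from max[OF this] have "w i * (c \<bullet> x - c \<bullet> vs ! i) \<le> 0"
      using i len by (simp add: lineup_point_list_update inner_add_right inner_diff_right)
    moreover have "0 < w i" using w i by (simp add: valid_weights_def)
    ultimately show ?thesis by (simp add: mult_le_0_iff)
  qed
  ultimately show ?thesis using vs by (simp add: greedy_lineup_def)
qed

lemma greedy_lineup_nth_le:
  assumes vs: "greedy_lineup r A c vs" and us: "greedy_lineup r A c us" and i: "i < r"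
  shows "c \<bullet> us ! i \<le> c \<bullet> vs ! i"
proof (rule ccontr)
  assume less: "\<not> ?thesis"
  have len: "length vs = r" "length us = r" and "distinct us" and us_A: "set us \<subseteq> A"
    using vs us by (auto simp: greedy_lineup_def lineup_lists_def)
  have sorted_vs: "\<And>a b. a < b \<Longrightarrow> b < r \<Longrightarrow> c \<bullet> vs ! b \<le> c \<bullet> vs ! a"
    and top_vs: "\<And>y m. y \<in> A - set vs \<Longrightarrow> m < r \<Longrightarrow> c \<bullet> y \<le> c \<bullet> vs ! m"
    and sorted_us: "\<And>a b. a < b \<Longrightarrow> b < r \<Longrightarrow> c \<bullet> us ! b \<le> c \<bullet> us ! a"
    using vs us unfolding greedy_lineup_def by blast+
  have "set (take (Suc i) us) \<subseteq> set (take i vs)"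
  proof
    fix x assume "x \<in> set (take (Suc i) us)"
    then obtain k where k: "k \<le> i" "x = us ! k"
      using i len by (auto simp: in_set_conv_nth less_Suc_eq_le)
    then have "c \<bullet> us ! i \<le> c \<bullet> x"
      using sorted_us[of k i] i by (cases "k = i") auto
    then have x_gt: "c \<bullet> vs ! i < c \<bullet> x" using less by simp
    have "x \<in> A" using k i len us_A nth_mem[of k us] by auto
    then have "x \<in> set vs" using top_vs[of x i] i x_gt by (meson DiffI not_less)
    then obtain m where m: "m < r" "x = vs ! m" using len by (auto simp: in_set_conv_nth)
    have "m < i"
    proof (rule ccontr)
      assume "\<not> m < i"
      then have "c \<bullet> x \<le> c \<bullet> vs ! i"
        using sorted_vs[of i m] m by (cases "m = i") auto
      with x_gt show False by simp
    qed
    then show "x \<in> set (take i vs)"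
      unfolding in_set_conv_nth using m len by (intro exI[of _ m]) auto
  qed
  then have "card (set (take (Suc i) us)) \<le> card (set (take i vs))"
    by (simp add: card_mono)
  also have "\<dots> \<le> i" using card_length[of "take i vs"] by simp
  finally show False using \<open>distinct us\<close> i len by (simp add: distinct_card)
qed

lemma lineup_optimal_swap:
  assumes os: "lineup_optimal r w A u os" and ij: "i < r" "j < r"
    and eq: "u \<bullet> os ! i = u \<bullet> os ! j"
  shows "lineup_optimal r w A u (os[i := os ! j, j := os ! i])"
proof -
  have len: "length os = r" and "distinct os" "set os \<subseteq> A"
    using os by (auto simp: lineup_optimal_def lineup_lists_def)
  then have "os[i := os ! j, j := os ! i] \<in> lineup_lists r A"
    using ij by (auto simp: lineup_lists_def)
  moreover have "u \<bullet> lineup_point r w (os[i := os ! j, j := os ! i]) = u \<bullet> lineup_point r w os"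
    using lineup_point_swap[of i r j os w] ij len eq by (simp add: inner_add_right inner_diff_right)
  ultimately show ?thesis using os by (simp add: lineup_optimal_def)
qed

lemma lineup_optimal_exists:
  assumes "finite A" "r \<le> card A"
  obtains vs where "lineup_optimal r w A c vs"
proof -
  let ?S = "lineup_lists r A" and ?f = "\<lambda>vs. c \<bullet> lineup_point r w vs"
  have fin: "finite (?f ` ?S)" using finite_lineup_lists[OF assms(1)] by simp
  have "Max (?f ` ?S) \<in> ?f ` ?S"
    using fin lineup_lists_nonempty[OF assms] by (intro Max_in) auto
  then obtain vs where "vs \<in> ?S" "?f vs = Max (?f ` ?S)" by auto
  then have "lineup_optimal r w A c vs"
    using fin by (auto simp: lineup_optimal_def intro: Max_ge)
  then show thesis by (rule that)
qed

lemma greedy_lineup_imp_optimal: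
  assumes w: "valid_weights r w" and A: "finite A" "r \<le> card A"
    and g: "greedy_lineup r A c vs"
  shows "lineup_optimal r w A c vs"
proof -
  obtain os where os: "lineup_optimal r w A c os" using lineup_optimal_exists[OF A] .
  have g_os: "greedy_lineup r A c os" using lineup_optimal_imp_greedy[OF w os] .
  have "c \<bullet> vs ! i = c \<bullet> os ! i" if "i < r" for i
    using greedy_lineup_nth_le[OF g g_os that] greedy_lineup_nth_le[OF g_os g that] by linarith
  then have "c \<bullet> lineup_point r w vs = c \<bullet> lineup_point r w os"
    by (simp add: inner_lineup_point)
  then show ?thesis using os g by (simp add: lineup_optimal_def greedy_lineup_def)
qed

lemma greedy_lineup_refines:
  assumes uc: "refines_on A u c" and g: "greedy_lineup r A u vs"
  shows "greedy_lineup r A c vs"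
proof -
  have vs: "vs \<in> lineup_lists r A"
    and sorted: "\<And>i j. i < j \<Longrightarrow> j < r \<Longrightarrow> u \<bullet> vs ! j \<le> u \<bullet> vs ! i"
    and top: "\<And>x i. x \<in> A - set vs \<Longrightarrow> i < r \<Longrightarrow> u \<bullet> x \<le> u \<bullet> vs ! i"
    using g unfolding greedy_lineup_def by blast+
  have in_A: "vs ! i \<in> A" if "i < r" for i
    using vs that nth_mem[of i vs] by (auto simp: lineup_lists_def)
  have mono: "\<And>a b. a \<in> A \<Longrightarrow> b \<in> A \<Longrightarrow> u \<bullet> a \<le> u \<bullet> b \<Longrightarrow> c \<bullet> a \<le> c \<bullet> b"
    using uc unfolding refines_on_def by blast
  show ?thesis
    unfolding greedy_lineup_def using vs sorted top in_A mono
    by (metis DiffD1 order.strict_trans)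
qed

lemma lineup_point_in_polytope:
  "vs \<in> lineup_lists r A \<Longrightarrow> lineup_point r w vs \<in> lineup_polytope r w A"
  by (simp add: lineup_polytope_def lineup_points_eq_image hull_inc)

lemma lineup_polytope_le_optimal:
  assumes "lineup_optimal r w A c os" "y \<in> lineup_polytope r w A"
  shows "c \<bullet> y \<le> c \<bullet> lineup_point r w os"
proof -
  have "lineup_polytope r w A \<subseteq> {y. c \<bullet> y \<le> c \<bullet> lineup_point r w os}"
    unfolding lineup_polytope_def using assms(1)
    by (intro hull_minimal)
       (auto simp: lineup_points_eq_image lineup_optimal_def convex_halfspace_le)
  then show ?thesis using assms(2) by blast
qed

lemma lineup_point_in_max_face_iff:
  assumes "vs \<in> lineup_lists r A"
  shows "lineup_point r w vs \<in> max_face (lineup_polytope r w A) c \<longleftrightarrow> lineup_optimal r w A c vs"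
proof
  assume "lineup_point r w vs \<in> max_face (lineup_polytope r w A) c"
  then show "lineup_optimal r w A c vs"
    using assms lineup_point_in_polytope[of _ r A w] by (auto simp: max_face_def lineup_optimal_def)
next
  assume "lineup_optimal r w A c vs"
  then show "lineup_point r w vs \<in> max_face (lineup_polytope r w A) c"
    using lineup_point_in_polytope[OF assms] lineup_polytope_le_optimal
    by (auto simp: max_face_def)
qed

lemma max_face_lineup_polytope_nonempty:
  assumes "finite A" "r \<le> card A"
  shows "max_face (lineup_polytope r w A) c \<noteq> {}"
proof -
  obtain os where os: "lineup_optimal r w A c os" using lineup_optimal_exists[OF assms] .
  then have "lineup_point r w os \<in> max_face (lineup_polytope r w A) c"
    using lineup_point_in_max_face_iff by (metis lineup_optimal_def)
  then show ?thesis by blast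
qed

lemma max_face_lineup_polytope_mono:
  assumes w: "valid_weights r w" and A: "finite A" "r \<le> card A"
    and uc: "refines_on A u c"
  shows "max_face (lineup_polytope r w A) u \<subseteq> max_face (lineup_polytope r w A) c"
proof
  let ?Q = "lineup_polytope r w A" and ?P = "lineup_points r w A"
  fix x assume x: "x \<in> max_face ?Q u"
  obtain oc where oc: "lineup_optimal r w A c oc" using lineup_optimal_exists[OF A] .
  have xQ: "x \<in> ?Q" and x_max: "\<And>y. y \<in> ?Q \<Longrightarrow> u \<bullet> y \<le> u \<bullet> x"
    using x by (auto simp: max_face_def)
  have P_Q: "?P \<subseteq> ?Q" unfolding lineup_polytope_def by (rule hull_subset)
  have "x \<in> convex hull {p\<in>?P. u \<bullet> p = u \<bullet> x}"
    using finite_lineup_lists[OF A(1)] xQ P_Q x_max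
    by (intro convex_hull_supporting_hyperplane)
       (auto simp: lineup_points_eq_image lineup_polytope_def)
  moreover have "convex hull {p\<in>?P. u \<bullet> p = u \<bullet> x} \<subseteq> {p. c \<bullet> p = c \<bullet> lineup_point r w oc}"
  proof (rule hull_minimal)
    show "{p\<in>?P. u \<bullet> p = u \<bullet> x} \<subseteq> {p. c \<bullet> p = c \<bullet> lineup_point r w oc}"
    proof safe
    fix p assume "p \<in> ?P" and p_max: "u \<bullet> p = u \<bullet> x"
    then obtain vs where vs: "vs \<in> lineup_lists r A" "p = lineup_point r w vs"
      by (auto simp: lineup_points_eq_image)
    have "p \<in> max_face ?Q u" using vs P_Q \<open>p \<in> ?P\<close> p_max x_max by (auto simp: max_face_def)
    then have "lineup_optimal r w A u vs" using lineup_point_in_max_face_iff vs by blast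
    then have "greedy_lineup r A c vs"
      using greedy_lineup_refines[OF uc] lineup_optimal_imp_greedy[OF w] by blast
    then have "lineup_optimal r w A c vs" using greedy_lineup_imp_optimal[OF w A] by blast
    then show "c \<bullet> p = c \<bullet> lineup_point r w oc"
      using oc vs by (auto simp: lineup_optimal_def intro: antisym)
    qed
  qed (rule convex_hyperplane)
  ultimately have "c \<bullet> x = c \<bullet> lineup_point r w oc" by blast
  then show "x \<in> max_face ?Q c"
    using xQ lineup_polytope_le_optimal[OF oc] by (auto simp: max_face_def)
qed

lemma refines_on_if_sweep_max_face_subset:
  assumes w: "valid_weights (card A) w" and A: "finite A"
    and sub: "max_face (lineup_polytope (card A) w A) u \<subseteq> max_face (lineup_polytope (card A) w A) c"
  shows "refines_on A u c"
  unfolding refines_on_def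
proof (intro ballI impI)
  fix a b assume a: "a \<in> A" and b: "b \<in> A" and ab: "u \<bullet> a \<le> u \<bullet> b"
  let ?n = "card A"
  obtain os where os: "lineup_optimal ?n w A u os" using lineup_optimal_exists[OF A] by blast
  then have len: "length os = ?n" and "distinct os" "set os \<subseteq> A"
    by (auto simp: lineup_optimal_def lineup_lists_def)
  then have "set os = A" using A by (metis card_subset_eq distinct_card)
  then obtain i j where ij: "i < ?n" "j < ?n" "os ! i = a" "os ! j = b"
    using a b len by (metis in_set_conv_nth)
  obtain ls i' j' where ls: "lineup_optimal ?n w A u ls" "j' \<le> i'" "i' < ?n" "ls ! i' = a" "ls ! j' = b"
  proof (cases "j \<le> i")
    case True
    then show thesis using that os ij by blast
  next
    case False
    then have "u \<bullet> b \<le> u \<bullet> a"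
      using lineup_optimal_imp_greedy[OF w os] ij by (auto simp: greedy_lineup_def)
    then have "lineup_optimal ?n w A u (os[i := os ! j, j := os ! i])"
      using lineup_optimal_swap[OF os ij(1,2)] ab ij by simp
    then show thesis using that[of _ i j] False ij len by (simp add: nth_list_update)
  qed
  have ls_lists: "ls \<in> lineup_lists ?n A" using ls(1) by (simp add: lineup_optimal_def)
  have "lineup_point ?n w ls \<in> max_face (lineup_polytope ?n w A) c"
    using sub ls(1) lineup_point_in_max_face_iff[OF ls_lists] by blast
  then have "greedy_lineup ?n A c ls"
    using lineup_point_in_max_face_iff[OF ls_lists] lineup_optimal_imp_greedy[OF w] by blast
  then show "c \<bullet> a \<le> c \<bullet> b"
    using ls by (cases "j' = i'") (auto simp: greedy_lineup_def)
qed

lemma face_normal_cone_sweep_max_face: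
  assumes "valid_weights (card A) w" "finite A"
  shows "face_normal_cone (lineup_polytope (card A) w A) (max_face (lineup_polytope (card A) w A) u)
           = {c. refines_on A u c}"
proof -
  have "max_face (lineup_polytope (card A) w A) u \<subseteq> lineup_polytope (card A) w A"
    by (auto simp: max_face_def)
  then show ?thesis
    using max_face_lineup_polytope_mono[OF assms(1,2) order_refl]
      refines_on_if_sweep_max_face_subset[OF assms]
    by (auto simp: mem_face_normal_cone_iff)
qed

lemma face_normal_cone_lineup_refines:
  assumes "valid_weights r w" "finite A" "r \<le> card A" "F \<subseteq> lineup_polytope r w A"
    and "u \<in> face_normal_cone (lineup_polytope r w A) F" "refines_on A u c"
  shows "c \<in> face_normal_cone (lineup_polytope r w A) F"
  using assms max_face_lineup_polytope_mono[OF assms(1-3,6)]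
  by (auto simp: mem_face_normal_cone_iff)

section \<open>The product of simplices\<close>

lemma mem_L_space_iff:
  "l \<in> (L_space :: (real^('d::finite \<times> 'n::finite)) set)
     \<longleftrightarrow> (\<forall>i i' j. l $ (i, j) = l $ (i', j))"
proof
  assume "l \<in> L_space"
  then show "\<forall>i i' j. l $ (i, j) = l $ (i', j)"
    unfolding L_space_def by (induction rule: span_induct_alt) auto
next
  let ?e = "\<lambda>j. (\<chi> p. if snd p = j then 1 else 0) :: real^('d \<times> 'n)"
  assume cols: "\<forall>i i' j. l $ (i, j) = l $ (i', j)"
  have "l = (\<Sum>j\<in>UNIV. l $ (undefined, j) *\<^sub>R ?e j)"
  proof (rule vec_eq_iff[THEN iffD2], rule allI)
    fix p :: "'d \<times> 'n"
    have "(\<Sum>j\<in>UNIV. l $ (undefined, j) *\<^sub>R ?e j) $ p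
        = (\<Sum>j\<in>UNIV. if j = snd p then l $ (undefined, j) else 0)"
      by (rule trans[OF sum_component]) (rule sum.cong, auto)
    also have "\<dots> = l $ p" using cols[rule_format, of undefined "snd p" "fst p"] by simp
    finally show "l $ p = (\<Sum>j\<in>UNIV. l $ (undefined, j) *\<^sub>R ?e j) $ p" by simp
  qed
  also have "\<dots> \<in> L_space"
    unfolding L_space_def by (intro span_sum span_scale span_base) auto
  finally show "l \<in> L_space" .
qed

lemma T_bar_iff:
  "x \<in> (T_bar :: (real^('d::{finite,linorder} \<times> 'n::finite)) set)
     \<longleftrightarrow> (\<forall>j i i'. i \<le> i' \<longrightarrow> x $ (i, j) \<le> x $ (i', j))"
proof
  assume "x \<in> T_bar"
  then obtain t l where x: "x = t + l" and t: "t \<in> T_cone" and l: "l \<in> L_space"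
    unfolding T_bar_def by blast
  show "\<forall>j i i'. i \<le> i' \<longrightarrow> x $ (i, j) \<le> x $ (i', j)"
  proof (intro allI impI)
    fix j :: 'n and i i' :: 'd assume "i \<le> i'"
    then have "t $ (i, j) \<le> t $ (i', j)" using t unfolding T_cone_def by blast
    moreover have "l $ (i, j) = l $ (i', j)" using l unfolding mem_L_space_iff by blast
    ultimately show "x $ (i, j) \<le> x $ (i', j)" using x by simp
  qed
next
  assume mono: "\<forall>j i i'. i \<le> i' \<longrightarrow> x $ (i, j) \<le> x $ (i', j)"
  define i0 where "i0 = Min (UNIV :: 'd set)"
  have i0: "i0 \<le> i" for i unfolding i0_def by (rule Min_le) auto
  define l :: "real^('d \<times> 'n)" where "l = (\<chi> p. x $ (i0, snd p))"
  have "l \<in> L_space" by (simp add: l_def mem_L_space_iff)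
  moreover have "x - l \<in> T_cone"
    unfolding T_cone_def
  proof (intro CollectI allI conjI impI)
    fix i i' :: 'd and j :: 'n
    show "0 \<le> (x - l) $ (i, j)" using mono i0[of i] by (simp add: l_def)
    assume "i \<le> i'"
    then show "(x - l) $ (i, j) \<le> (x - l) $ (i', j)" using mono by (simp add: l_def)
  qed
  ultimately show "x \<in> T_bar" unfolding T_bar_def by force
qed

lemma T_bar_pointed:
  assumes "x \<in> T_bar" "- x \<in> T_bar"
  shows "x \<in> (L_space :: (real^('d::{finite,linorder} \<times> 'n::finite)) set)"
  unfolding mem_L_space_iff
proof (intro allI)
  fix i i' :: 'd and j :: 'n
  have "x $ (a, j) \<le> x $ (b, j)" and "- x $ (a, j) \<le> - x $ (b, j)" if "a \<le> b" for a b
    using assms that unfolding T_bar_iff by auto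
  then show "x $ (i, j) = x $ (i', j)"
    by (cases "i \<le> i'") (fastforce intro: antisym)+
qed

lemma inner_Pi_vert:
  "c \<bullet> (Pi_vert f :: real^('d::finite \<times> 'n::finite)) = (\<Sum>j\<in>UNIV. c $ (f j, j))"
proof -
  have "c \<bullet> Pi_vert f = (\<Sum>p\<in>UNIV. if fst p = f (snd p) then c $ p else 0)"
    by (auto simp: inner_vec_def Pi_vert_def intro: sum.cong)
  also have "\<dots> = (\<Sum>i\<in>UNIV. \<Sum>j\<in>UNIV. if i = f j then c $ (i, j) else 0)"
    by (subst sum.cartesian_product) (auto simp: split_beta intro!: sum.cong)
  also have "\<dots> = (\<Sum>j\<in>UNIV. c $ (f j, j))"
    by (subst sum.swap) (simp add: sum.delta)
  finally show ?thesis .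
qed

lemma inner_Pi_vert_fun_upd_diff:
  "c \<bullet> (Pi_vert (f(j := i')) :: real^('d::finite \<times> 'n::finite)) - c \<bullet> Pi_vert (f(j := i))
     = c $ (i', j) - c $ (i, j)"
proof -
  have "c \<bullet> (Pi_vert (f(j := k)) :: real^('d \<times> 'n)) = c $ (k, j) + (\<Sum>m\<in>UNIV - {j}. c $ (f m, m))"
    for k
    unfolding inner_Pi_vert by (subst sum.remove[of UNIV j]) (auto intro: sum.cong)
  then show ?thesis by simp
qed

lemma finite_Pi_vertices: "finite (Pi_vertices :: (real^('d::finite \<times> 'n::finite)) set)"
  unfolding Pi_vertices_def by simp

lemma card_Pi_vertices:
  "card (Pi_vertices :: (real^('d::finite \<times> 'n::finite)) set) = CARD('d) ^ CARD('n)"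
proof -
  have "inj (Pi_vert :: ('n \<Rightarrow> 'd) \<Rightarrow> real^('d \<times> 'n))"
  proof (rule injI)
    fix f g :: "'n \<Rightarrow> 'd"
    assume eq: "Pi_vert f = (Pi_vert g :: real^('d \<times> 'n))"
    have one: "(Pi_vert g :: real^('d \<times> 'n)) $ (f j, j) = 1" for j
      unfolding eq[symmetric] by (simp add: Pi_vert_def)
    have "f j = g j" for j
      using one[of j] by (simp add: Pi_vert_def split: if_splits)
    then show "f = g" by blast
  qed
  then show ?thesis unfolding Pi_vertices_def by (simp add: card_image card_fun)
qed

lemma L_space_inner_Pi_vertices_eq:
  assumes "l \<in> L_space" "a \<in> Pi_vertices" "b \<in> (Pi_vertices :: (real^('d::finite \<times> 'n::finite)) set)"
  shows "l \<bullet> a = l \<bullet> b"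
proof -
  obtain f g where "a = Pi_vert f" "b = Pi_vert g"
    using assms(2,3) unfolding Pi_vertices_def by blast
  moreover have "l $ (f j, j) = l $ (g j, j)" for j
    using assms(1) unfolding mem_L_space_iff by blast
  ultimately show ?thesis by (simp add: inner_Pi_vert)
qed

lemma T_bar_refines:
  assumes "v \<in> T_bar" "refines_on Pi_vertices v c"
  shows "c \<in> (T_bar :: (real^('d::{finite,linorder} \<times> 'n::finite)) set)"
  unfolding T_bar_iff
proof (intro allI impI)
  fix j :: 'n and i i' :: 'd assume "i \<le> i'"
  let ?f = "\<lambda>_::'n. i"
  have "v $ (i, j) \<le> v $ (i', j)" using assms(1) \<open>i \<le> i'\<close> by (simp add: T_bar_iff)
  then have "v \<bullet> (Pi_vert (?f(j := i)) :: real^('d \<times> 'n)) \<le> v \<bullet> Pi_vert (?f(j := i'))"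
    using inner_Pi_vert_fun_upd_diff[of v ?f j i' i] by simp
  then have "c \<bullet> (Pi_vert (?f(j := i)) :: real^('d \<times> 'n)) \<le> c \<bullet> Pi_vert (?f(j := i'))"
    using assms(2) by (simp add: refines_on_def Pi_vertices_def)
  then show "c $ (i, j) \<le> c $ (i', j)"
    using inner_Pi_vert_fun_upd_diff[of c ?f j i' i] by simp
qed

lemma test_fan_lineup_polytope_cone:
  fixes K :: "(real^('d::{finite,linorder} \<times> 'n::finite)) set"
  assumes w: "valid_weights r w" and r: "r \<le> card (Pi_vertices :: (real^('d \<times> 'n)) set)"
    and K: "K \<in> test_fan (normal_fan (lineup_polytope r w Pi_vertices))"
  shows "0 \<in> K" and "K \<subseteq> T_bar"
    and "\<And>x c. x \<in> K \<Longrightarrow> refines_on Pi_vertices x c \<Longrightarrow> c \<in> K"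
proof -
  obtain C F where K: "K = C \<inter> T_bar" and C: "C = face_normal_cone (lineup_polytope r w Pi_vertices) F"
    and F: "F face_of lineup_polytope r w Pi_vertices"
    using assms(3) unfolding test_fan_def normal_fan_def by blast
  show "0 \<in> K" unfolding K C by (simp add: face_normal_cone_def T_bar_iff)
  show "K \<subseteq> T_bar" unfolding K by blast
  show "c \<in> K" if "x \<in> K" "refines_on Pi_vertices x c" for x c
    using that face_normal_cone_lineup_refines[OF w finite_Pi_vertices r face_of_imp_subset[OF F]]
      T_bar_refines unfolding K C by blast
qed

lemma refinement_closed_cone_eq:
  fixes K :: "(real^('d::{finite,linorder} \<times> 'n::finite)) set"
  assumes closed: "\<And>x c. x \<in> K \<Longrightarrow> refines_on Pi_vertices x c \<Longrightarrow> c \<in> K"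
    and "0 \<in> K" "K \<subseteq> T_bar"
    and dim: "aff_dim K = aff_dim (L_space :: (real^('d \<times> 'n)) set) + 1"
  obtains v where "K = {c. refines_on Pi_vertices v c}"
proof -
  let ?A = "Pi_vertices :: (real^('d \<times> 'n)) set" and ?L = "L_space :: (real^('d \<times> 'n)) set"
  have L_const: "l \<bullet> a = l \<bullet> b" if "l \<in> ?L" "a \<in> ?A" "b \<in> ?A" for l a b
    using L_space_inner_Pi_vertices_eq that by blast
  obtain v where v: "v \<in> K" and ray: "\<And>c. c \<in> K \<Longrightarrow> \<exists>s\<ge>0. c - s *\<^sub>R v \<in> ?L"
  proof (rule cone_ray_over_subspace)
    show "subspace ?L" unfolding L_space_def by simp
    show "?L \<subseteq> K"
    proof
      fix l assume "l \<in> ?L"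
      then have "refines_on ?A 0 (0 *\<^sub>R 0 + l)"
        by (rule refines_on_scale_add[OF order_refl L_const])
      then show "l \<in> K" using closed[OF \<open>0 \<in> K\<close>] by simp
    qed
    show "cone K" unfolding cone_def
    proof (intro ballI allI impI)
      fix x and t :: real assume "x \<in> K" "0 \<le> t"
      then have "refines_on ?A x (t *\<^sub>R x + 0)" by (intro refines_on_scale_add) simp_all
      then show "t *\<^sub>R x \<in> K" using closed[OF \<open>x \<in> K\<close>] by simp
    qed
    show "x + l \<in> K" if "x \<in> K" "l \<in> ?L" for x l
    proof -
      have "refines_on ?A x (1 *\<^sub>R x + l)"
        by (rule refines_on_scale_add[OF zero_le_one L_const[OF that(2)]])
      then show ?thesis using closed[OF that(1)] by simp
    qed
    show "x \<in> ?L" if "x \<in> K" "- x \<in> K" for x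
      using T_bar_pointed that \<open>K \<subseteq> T_bar\<close> by blast
  qed (use dim that in blast)+
  have "K = {c. refines_on ?A v c}"
  proof
    show "K \<subseteq> {c. refines_on ?A v c}"
    proof
      fix c assume "c \<in> K"
      then obtain s where "0 \<le> s" "c - s *\<^sub>R v \<in> ?L" using ray by blast
      then have "refines_on ?A v (s *\<^sub>R v + (c - s *\<^sub>R v))"
        using refines_on_scale_add L_const by blast
      then show "c \<in> {c. refines_on ?A v c}" by simp
    qed
  qed (use closed v in blast)
  then show thesis by (rule that)
qed

theorem proposition2p3:
  fixes r :: nat and w w' :: "nat \<Rightarrow> real"
    and K :: "(real^('d::{finite,linorder} \<times> 'n::finite)) set"
  assumes "1 \<le> r" and "r \<le> CARD('d) ^ CARD('n)"
    and "valid_weights r w"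
    and "valid_weights (CARD('d) ^ CARD('n)) w'"
    and "K \<in> test_fan (normal_fan (lineup_polytope r w (Pi_vertices :: (real^('d \<times> 'n)) set)))"
    and "aff_dim K = aff_dim (L_space :: (real^('d \<times> 'n)) set) + 1"
  shows "K \<in> normal_fan (lineup_polytope (CARD('d) ^ CARD('n)) w' (Pi_vertices :: (real^('d \<times> 'n)) set))"
proof -
  let ?A = "Pi_vertices :: (real^('d \<times> 'n)) set"
  let ?S = "lineup_polytope (card ?A) w' ?A"
  have card_A: "card ?A = CARD('d) ^ CARD('n)" by (rule card_Pi_vertices)
  then have "r \<le> card ?A" and w': "valid_weights (card ?A) w'" using assms(2,4) by simp_all
  obtain v where "K = {c. refines_on ?A v c}"
    using refinement_closed_cone_eq test_fan_lineup_polytope_cone[OF assms(3) \<open>r \<le> card ?A\<close> assms(5)]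
      assms(6) by metis
  also have "\<dots> = face_normal_cone ?S (max_face ?S v)"
    using face_normal_cone_sweep_max_face[OF w' finite_Pi_vertices] by simp
  finally have "K = face_normal_cone ?S (max_face ?S v)" .
  moreover have "max_face ?S v face_of ?S"
    by (rule max_face_face_of) (simp add: lineup_polytope_def convex_convex_hull)
  moreover have "max_face ?S v \<noteq> {}"
    using max_face_lineup_polytope_nonempty finite_Pi_vertices by blast
  ultimately show ?thesis unfolding normal_fan_def card_A[symmetric] by blast
qed

end
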